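(* Let $\Gamma$ be a finite connected graph and let $\Sigma$ be a motif in $\Gamma$ with vertices $p_1,\dots,p_m$. Suppose that $1$ is an eigenvalue of the normalized Laplacian of the graph $\Sigma$, with eigenfunction $f^\Sigma$. Let $\Gamma^\Sigma$ be the graph obtained from $\Gamma$ by adding new vertices $q_1,\dots,q_m$, joining $q_\alpha$ and $q_\beta$ by an edge whenever $p_\alpha\sim p_\beta$, and joining each $q_\alpha$ by an edge to every vertex $p\notin\Sigma$ that is a neighbor of $p_\alpha$ in $\Gamma$. Then $1$ is an eigenvalue of the normalized Laplacian of $\Gamma^\Sigma$, with an eigenfunction that vanishes at every vertex other than $p_1,\dots,p_m,q_1,\dots,q_m$.
   Context: For a finite simple graph without isolated vertices, write $i\sim j$ for adjacency and $n_i$ for the degree of $i$. The normalized Laplacian acts on real functions $v$ on the vertices by $\Delta v(i)=v(i)-\frac{1}{n_i}\sum_{j\sim i}v(j)$; $\lambda$ is an eigenvalue with eigenfunction $u$ if $u\not\equiv 0$ and $\frac{1}{n_i}\sum_{j\sim i}u(j)=(1-\lambda)u(i)$ for all $i$. A motif in $\Gamma$ is a connected subgraph $\Sigma$ of $\Gamma$ containing all edges of $\Gamma$ between its vertices (i.e. a connected induced subgraph). *)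

theory Defs
  imports Complex_Main
begin

definition simple_graph :: "'a set \<Rightarrow> ('a \<Rightarrow> 'a \<Rightarrow> bool) \<Rightarrow> bool" where
  "simple_graph V E \<longleftrightarrow> finite V \<and> (\<forall>a b. E a b \<longrightarrow> a \<in> V \<and> b \<in> V)
     \<and> (\<forall>a b. E a b \<longrightarrow> E b a) \<and> (\<forall>a. \<not> E a a)"

definition no_isolated :: "'a set \<Rightarrow> ('a \<Rightarrow> 'a \<Rightarrow> bool) \<Rightarrow> bool" where
  "no_isolated V E \<longleftrightarrow> (\<forall>i\<in>V. \<exists>j\<in>V. E i j)"

definition connected_graph :: "'a set \<Rightarrow> ('a \<Rightarrow> 'a \<Rightarrow> bool) \<Rightarrow> bool" where
  "connected_graph V E \<longleftrightarrow> V \<noteq> {} \<and> (\<forall>a\<in>V. \<forall>b\<in>V. E\<^sup>*\<^sup>* a b)"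

definition nbrs :: "'a set \<Rightarrow> ('a \<Rightarrow> 'a \<Rightarrow> bool) \<Rightarrow> 'a \<Rightarrow> 'a set" where
  "nbrs V E i = {j \<in> V. E i j}"

definition degree :: "'a set \<Rightarrow> ('a \<Rightarrow> 'a \<Rightarrow> bool) \<Rightarrow> 'a \<Rightarrow> nat" where
  "degree V E i = card (nbrs V E i)"

definition is_eigenfunction ::
  "'a set \<Rightarrow> ('a \<Rightarrow> 'a \<Rightarrow> bool) \<Rightarrow> real \<Rightarrow> ('a \<Rightarrow> real) \<Rightarrow> bool" where
  "is_eigenfunction V E lam u \<longleftrightarrow> simple_graph V E \<and> no_isolated V E
     \<and> (\<exists>i\<in>V. u i \<noteq> 0)
     \<and> (\<forall>i\<in>V. (1 / real (degree V E i)) * (\<Sum>j\<in>nbrs V E i. u j) = (1 - lam) * u i)"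

definition is_eigenvalue :: "'a set \<Rightarrow> ('a \<Rightarrow> 'a \<Rightarrow> bool) \<Rightarrow> real \<Rightarrow> bool" where
  "is_eigenvalue V E lam \<longleftrightarrow> (\<exists>u. is_eigenfunction V E lam u)"

definition induced :: "'a set \<Rightarrow> ('a \<Rightarrow> 'a \<Rightarrow> bool) \<Rightarrow> 'a \<Rightarrow> 'a \<Rightarrow> bool" where
  "induced S E a b \<longleftrightarrow> a \<in> S \<and> b \<in> S \<and> E a b"

definition motif :: "'a set \<Rightarrow> ('a \<Rightarrow> 'a \<Rightarrow> bool) \<Rightarrow> 'a set \<Rightarrow> bool" where
  "motif V E S \<longleftrightarrow> S \<subseteq> V \<and> connected_graph S (induced S E)"

text \<open>The graph Gamma^Sigma: old vertices Inl v (v in V), new vertices Inr p (copy q of p in S).\<close>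
definition dup_vertices :: "'a set \<Rightarrow> 'a set \<Rightarrow> ('a + 'a) set" where
  "dup_vertices V S = Inl ` V \<union> Inr ` S"

fun dup_edges :: "'a set \<Rightarrow> ('a \<Rightarrow> 'a \<Rightarrow> bool) \<Rightarrow> 'a set \<Rightarrow> 'a + 'a \<Rightarrow> 'a + 'a \<Rightarrow> bool" where
  "dup_edges V E S (Inl a) (Inl b) = E a b"
| "dup_edges V E S (Inr a) (Inr b) = (a \<in> S \<and> b \<in> S \<and> E a b)"
| "dup_edges V E S (Inr a) (Inl p) = (a \<in> S \<and> p \<in> V \<and> p \<notin> S \<and> E a p)"
| "dup_edges V E S (Inl p) (Inr a) = (a \<in> S \<and> p \<in> V \<and> p \<notin> S \<and> E a p)"

end

theory Submission
  imports Defs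
begin

(* For eigenvalue 1 the eigen-equation says that the neighbour sums of the eigenfunction
   vanish. Put f on the vertices p_a of Sigma, -f on their copies q_a, and 0 elsewhere. At p_a
   or q_a the neighbours inside Sigma (resp. among the copies) contribute plus or minus the
   vanishing Sigma-neighbour sum of f, and all other neighbours carry 0. At a vertex p outside
   Sigma, each neighbour p_a is matched by its copy q_a, so the values cancel in pairs. *)

lemma degree_pos:
  assumes "finite V" "no_isolated V E" "i \<in> V"
  shows "degree V E i > 0"
proof -
  have "nbrs V E i \<noteq> {}"
    using assms(2,3) unfolding no_isolated_def nbrs_def by auto
  then show ?thesis
    using assms(1) unfolding degree_def nbrs_def by (simp add: card_gt_0_iff)
qed

lemma is_eigenfunction_1_iff:
  "is_eigenfunction V E 1 u \<longleftrightarrow> simple_graph V E \<and> no_isolated V E \<and> (\<exists>i\<in>V. u i \<noteq> 0)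
     \<and> (\<forall>i\<in>V. (\<Sum>j\<in>nbrs V E i. u j) = 0)"
proof -
  have "(1 / real (degree V E i) * (\<Sum>j\<in>nbrs V E i. u j) = 0) \<longleftrightarrow> (\<Sum>j\<in>nbrs V E i. u j) = 0"
    if "simple_graph V E" "no_isolated V E" "i \<in> V" for i
    using degree_pos[of V E i] that unfolding simple_graph_def by simp
  then show ?thesis unfolding is_eigenfunction_def by auto
qed

lemma nbrs_induced:
  "i \<in> S \<Longrightarrow> nbrs S (induced S E) i = {j \<in> S. E i j}"
  unfolding nbrs_def induced_def by auto

lemma nbrs_dup_Inl:
  "nbrs (dup_vertices V S) (dup_edges V E S) (Inl v)
   = Inl ` {w \<in> V. E v w} \<union> Inr ` {a \<in> S. v \<in> V \<and> v \<notin> S \<and> E a v}"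
  unfolding nbrs_def dup_vertices_def
  by (rule set_eqI) (case_tac x; auto)

lemma nbrs_dup_Inr:
  "a \<in> S \<Longrightarrow> nbrs (dup_vertices V S) (dup_edges V E S) (Inr a)
   = Inl ` {p \<in> V. p \<notin> S \<and> E a p} \<union> Inr ` {b \<in> S. E a b}"
  unfolding nbrs_def dup_vertices_def
  by (rule set_eqI) (case_tac x; auto)

lemma simple_graph_dup:
  assumes "simple_graph V E" "S \<subseteq> V"
  shows "simple_graph (dup_vertices V S) (dup_edges V E S)"
proof -
  have "finite S" using assms finite_subset unfolding simple_graph_def by blast
  moreover have "dup_edges V E S a b \<Longrightarrow> a \<in> dup_vertices V S \<and> b \<in> dup_vertices V S"
    and "dup_edges V E S a b \<Longrightarrow> dup_edges V E S b a"
    and "\<not> dup_edges V E S a a" for a b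
    using assms unfolding simple_graph_def dup_vertices_def
    by (cases a; cases b; auto)+
  ultimately show ?thesis
    using assms(1) unfolding simple_graph_def dup_vertices_def by blast
qed

lemma no_isolated_dup:
  assumes "no_isolated V E" "no_isolated S (induced S E)"
  shows "no_isolated (dup_vertices V S) (dup_edges V E S)"
  unfolding no_isolated_def
proof
  fix x assume x: "x \<in> dup_vertices V S"
  show "\<exists>y\<in>dup_vertices V S. dup_edges V E S x y"
  proof (cases x)
    case (Inl v)
    with x obtain w where "w \<in> V" "E v w"
      using assms(1) unfolding no_isolated_def dup_vertices_def by auto
    with Inl show ?thesis unfolding dup_vertices_def by (intro bexI[of _ "Inl w"]) auto
  next
    case (Inr a)
    with x obtain b where "a \<in> S" "b \<in> S" "E a b"
      using assms(2) unfolding no_isolated_def induced_def dup_vertices_def by auto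
    with Inr show ?thesis unfolding dup_vertices_def by (intro bexI[of _ "Inr b"]) auto
  qed
qed

lemma sum_Inl_Inr:
  assumes "finite A" "finite B"
  shows "(\<Sum>x\<in>Inl ` A \<union> Inr ` B. g x) = (\<Sum>a\<in>A. g (Inl a)) + (\<Sum>b\<in>B. g (Inr b))"
  using assms by (subst sum.union_disjoint) (auto simp: sum.reindex)

definition antisym_lift :: "'a set \<Rightarrow> ('a \<Rightarrow> real) \<Rightarrow> 'a + 'a \<Rightarrow> real" where
  "antisym_lift S f = case_sum (\<lambda>p. if p \<in> S then f p else 0) (\<lambda>p. if p \<in> S then - f p else 0)"

lemma antisym_lift_nbrs_sum:
  assumes "finite V" "S \<subseteq> V" and E_sym: "\<And>a b. E a b \<Longrightarrow> E b a"
    and f_harmonic: "\<And>i. i \<in> S \<Longrightarrow> (\<Sum>j\<in>{j \<in> S. E i j}. f j) = 0"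
    and x: "x \<in> dup_vertices V S"
  shows "(\<Sum>y\<in>nbrs (dup_vertices V S) (dup_edges V E S) x. antisym_lift S f y) = 0"
proof (cases x)
  case (Inl v)
  have fin: "finite {w \<in> V. E v w}" "finite {a \<in> S. v \<in> V \<and> v \<notin> S \<and> E a v}"
    using assms(1,2) by (auto intro: finite_subset)
  have "(\<Sum>w\<in>{w \<in> V. E v w}. antisym_lift S f (Inl w)) = (\<Sum>w\<in>{w \<in> V. E v w} \<inter> S. f w)"
    using fin by (simp add: antisym_lift_def sum.inter_restrict)
  also have "{w \<in> V. E v w} \<inter> S = {w \<in> S. E v w}"
    using assms(2) by auto
  finally have old: "(\<Sum>w\<in>{w \<in> V. E v w}. antisym_lift S f (Inl w)) = (\<Sum>w\<in>{w \<in> S. E v w}. f w)" .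
  show ?thesis
  proof (cases "v \<in> S")
    case True
    then show ?thesis
      using sum_Inl_Inr[OF fin, of "antisym_lift S f"] old f_harmonic Inl
      by (simp add: nbrs_dup_Inl)
  next
    case False
    with x Inl have "{a \<in> S. v \<in> V \<and> v \<notin> S \<and> E a v} = {w \<in> S. E v w}"
      using E_sym unfolding dup_vertices_def by blast
    then show ?thesis
      using sum_Inl_Inr[OF fin, of "antisym_lift S f"] old Inl
      by (simp add: nbrs_dup_Inl antisym_lift_def sum_negf)
  qed
next
  case (Inr a)
  with x have a: "a \<in> S" unfolding dup_vertices_def by auto
  have fin: "finite {p \<in> V. p \<notin> S \<and> E a p}" "finite {b \<in> S. E a b}"
    using assms(1,2) by (auto intro: finite_subset)
  show ?thesis
    using sum_Inl_Inr[OF fin, of "antisym_lift S f"] f_harmonic[OF a] Inr a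
    by (simp add: nbrs_dup_Inr antisym_lift_def sum_negf)
qed

theorem theorem1:
  fixes V :: "'a set" and E :: "'a \<Rightarrow> 'a \<Rightarrow> bool" and S :: "'a set" and f :: "'a \<Rightarrow> real"
  assumes "simple_graph V E" and "no_isolated V E" and "connected_graph V E"
    and "motif V E S"
    and "is_eigenfunction S (induced S E) 1 f"
  shows "\<exists>g. is_eigenfunction (dup_vertices V S) (dup_edges V E S) 1 g
           \<and> (\<forall>x \<in> dup_vertices V S. x \<notin> Inl ` S \<union> Inr ` S \<longrightarrow> g x = 0)"
proof (intro exI conjI)
  let ?g = "antisym_lift S f"
  have SV: "S \<subseteq> V" using assms(4) unfolding motif_def by simp
  have V: "finite V" "\<And>a b. E a b \<Longrightarrow> E b a"
    using assms(1) unfolding simple_graph_def by auto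
  obtain i where "i \<in> S" "f i \<noteq> 0" "no_isolated S (induced S E)"
    and f_harmonic: "\<And>i. i \<in> S \<Longrightarrow> (\<Sum>j\<in>{j \<in> S. E i j}. f j) = 0"
    using assms(5) by (auto simp: is_eigenfunction_1_iff nbrs_induced)
  then show "is_eigenfunction (dup_vertices V S) (dup_edges V E S) 1 ?g"
    using SV antisym_lift_nbrs_sum[OF V(1) SV V(2) f_harmonic]
      simple_graph_dup[OF assms(1) SV] no_isolated_dup[OF assms(2)]
    unfolding is_eigenfunction_1_iff dup_vertices_def
    by (auto intro!: bexI[of _ "Inl i"] simp: antisym_lift_def)
  show "\<forall>x \<in> dup_vertices V S. x \<notin> Inl ` S \<union> Inr ` S \<longrightarrow> ?g x = 0"
    unfolding antisym_lift_def by (auto split: sum.split)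
qed

end
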